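(* $\mathbf\Delta$ is an open subset of $\mathcal P(\mathcal H)\times\mathcal P(\mathcal H)$ (for the operator norm topology); in particular $\mathbf\Delta$ is a submanifold of $\mathcal P(\mathcal H)\times\mathcal P(\mathcal H)$.
   Context: $\mathcal H$ is a separable infinite-dimensional complex Hilbert space, $\mathcal B(\mathcal H)$ the bounded operators, $\mathcal P(\mathcal H)=\{P\in\mathcal B(\mathcal H):P=P^2=P^*\}$ with the norm topology (a $C^\infty$ submanifold of $\mathcal B(\mathcal H)$). For a closed subspace $\mathcal S$, $P_{\mathcal S}$ denotes the orthogonal projection onto $\mathcal S$. Two closed subspaces $\mathcal S,\mathcal T$ have a common complement if there is a closed subspace $\mathcal Z$ with $\mathcal S\cap\mathcal Z=\mathcal T\cap\mathcal Z=\{0\}$ and $\mathcal S+\mathcal Z=\mathcal T+\mathcal Z=\mathcal H$. $\mathbf\Delta=\{(P_{\mathcal S},P_{\mathcal T})\in\mathcal P(\mathcal H)\times\mathcal P(\mathcal H):\mathcal S,\mathcal T\text{ have a common complement}\}$. *)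

theory Defs
  imports "HOL-Analysis.Analysis"
begin

class complex_vector = real_vector +
  fixes scaleC :: "complex \<Rightarrow> 'a \<Rightarrow> 'a" (infixr \<open>*\<^sub>C\<close> 75)
  assumes scaleC_add_right: "a *\<^sub>C (x + y) = a *\<^sub>C x + a *\<^sub>C y"
    and scaleC_add_left: "(a + b) *\<^sub>C x = a *\<^sub>C x + b *\<^sub>C x"
    and scaleC_scaleC: "a *\<^sub>C (b *\<^sub>C x) = (a * b) *\<^sub>C x"
    and scaleC_one: "1 *\<^sub>C x = x"
    and scaleC_of_real: "(complex_of_real r) *\<^sub>C x = r *\<^sub>R x"

class complex_inner = complex_vector + real_normed_vector +
  fixes cinner :: "'a \<Rightarrow> 'a \<Rightarrow> complex"
  assumes cinner_commute: "cinner x y = cnj (cinner y x)"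
    and cinner_add_left: "cinner (x + y) z = cinner x z + cinner y z"
    and cinner_scaleC_left: "cinner (a *\<^sub>C x) y = cnj a * cinner x y"
    and cinner_norm: "cinner x x = complex_of_real ((norm x)\<^sup>2)"

class chilbert_space = complex_inner + complete_space

definition cspan :: "'a::complex_vector set \<Rightarrow> 'a set" where
  "cspan S = {(\<Sum>s\<in>F. c s *\<^sub>C s) | F c. finite F \<and> F \<subseteq> S}"

definition separable_space :: "'a::topological_space itself \<Rightarrow> bool" where
  "separable_space _ \<longleftrightarrow> (\<exists>D::'a set. countable D \<and> closure D = UNIV)"

definition infinite_dimensional :: "'a::complex_vector itself \<Rightarrow> bool" where
  "infinite_dimensional _ \<longleftrightarrow> \<not> (\<exists>S::'a set. finite S \<and> cspan S = UNIV)"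

definition closed_csubspace :: "'a::{complex_vector,topological_space} set \<Rightarrow> bool" where
  "closed_csubspace Z \<longleftrightarrow> closed Z \<and> 0 \<in> Z \<and> (\<forall>x\<in>Z. \<forall>y\<in>Z. x + y \<in> Z)
     \<and> (\<forall>c. \<forall>x\<in>Z. c *\<^sub>C x \<in> Z)"

text \<open>The set of orthogonal projections in B(H): complex-linear bounded operators P
  with P^2 = P and P^* = P.  Bounded operators are elements of the type of bounded
  (real-)linear maps carrying the operator norm, restricted to complex-linear ones.\<close>
definition orth_projections :: "('a::complex_inner \<Rightarrow>\<^sub>L 'a) set" where
  "orth_projections = {P::'a \<Rightarrow>\<^sub>L 'a. (\<forall>c x. blinfun_apply P (c *\<^sub>C x) = c *\<^sub>C blinfun_apply P x)
      \<and> P o\<^sub>L P = P \<and> (\<forall>x y. cinner (blinfun_apply P x) y = cinner x (blinfun_apply P y))}"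

definition common_complement :: "'a::{complex_vector,topological_space} set \<Rightarrow> 'a set \<Rightarrow> bool" where
  "common_complement S T \<longleftrightarrow> (\<exists>Z. closed_csubspace Z \<and> S \<inter> Z = {0} \<and> T \<inter> Z = {0}
     \<and> {s + z | s z. s \<in> S \<and> z \<in> Z} = UNIV \<and> {t + z | t z. t \<in> T \<and> z \<in> Z} = UNIV)"

text \<open>Delta: pairs (P_S, P_T) of orthogonal projections whose ranges S, T have a common
  complement (the range of an orthogonal projection P_S is S).\<close>
definition Delta :: "(('a::complex_inner \<Rightarrow>\<^sub>L 'a) \<times> ('a \<Rightarrow>\<^sub>L 'a)) set" where
  "Delta = {(P, Q). P \<in> orth_projections \<and> Q \<in> orth_projections
      \<and> common_complement (range (blinfun_apply P)) (range (blinfun_apply Q))}"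

end

theory Submission
  imports Defs
begin

text \<open>
  Let \<open>Z\<close> be a closed common complement of \<open>S = ran P\<close> and \<open>T = ran Q\<close>. By the Baire category
  theorem the projection onto \<open>S\<close> along \<open>Z\<close> is bounded, say by \<open>K\<close>. If \<open>P'\<close> is an idempotent
  with \<open>\<parallel>P' - P\<parallel> < 1/(K + 1)\<close>, then \<open>Z\<close> is still a complement of \<open>ran P'\<close>: a vector of
  \<open>ran P' \<inter> Z\<close> is moved by \<open>P\<close> by a relatively small amount, which a bounded projection
  forbids unless it is \<open>0\<close>, and \<open>ran P' + Z\<close> is everything by a contraction argument. Hence
  for each \<open>Z\<close> the pairs of projections whose ranges are complemented by \<open>Z\<close> form an open set,
  and \<open>\<Delta>\<close> is the union of these sets.
\<close>

lemma Baire_closed_cover: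
  fixes F :: "nat \<Rightarrow> 'a::{real_normed_vector,complete_space} set"
  assumes closed: "\<And>n. closed (F n)" and cover: "(\<Union>n. F n) = UNIV"
  shows "\<exists>n. interior (F n) \<noteq> {}"
proof (rule ccontr)
  assume "\<nexists>n. interior (F n) \<noteq> {}"
  then have "euclidean interior_of (\<Union>(range F)) = {}"
    using Baire_category_alt[of euclidean "range F"] completely_metrizable_space_euclidean closed
    by auto
  then show False
    using cover by simp
qed

locale complementary_subspaces =
  fixes S Z :: "'a::banach set"
  assumes closed_S: "closed S" and subspace_S: "subspace S"
    and closed_Z: "closed Z" and subspace_Z: "subspace Z"
    and S_Int_Z: "S \<inter> Z = {0}" and decompose: "\<And>x. \<exists>s\<in>S. x - s \<in> Z"
begin

definition proj :: "'a \<Rightarrow> 'a" where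
  "proj x = (SOME s. s \<in> S \<and> x - s \<in> Z)"

lemma proj_in_S: "proj x \<in> S" and diff_proj_in_Z: "x - proj x \<in> Z"
proof -
  have "\<exists>s. s \<in> S \<and> x - s \<in> Z"
    using decompose by blast
  then have "proj x \<in> S \<and> x - proj x \<in> Z"
    unfolding proj_def by (rule someI_ex)
  then show "proj x \<in> S" "x - proj x \<in> Z" by auto
qed

lemma proj_unique:
  assumes "s \<in> S" "x - s \<in> Z"
  shows "proj x = s"
proof -
  have "s - proj x \<in> Z"
    using subspace_diff[OF subspace_Z diff_proj_in_Z[of x] assms(2)] by (simp add: algebra_simps)
  moreover have "s - proj x \<in> S"
    using subspace_diff[OF subspace_S assms(1) proj_in_S] .
  ultimately have "s - proj x = 0"
    using S_Int_Z by blast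
  then show ?thesis
    by simp
qed

lemma linear_proj: "linear proj"
proof
  fix x y :: 'a and c :: real
  have "x + y - (proj x + proj y) \<in> Z"
    using subspace_add[OF subspace_Z diff_proj_in_Z[of x] diff_proj_in_Z[of y]] by (simp add: algebra_simps)
  then show "proj (x + y) = proj x + proj y"
    by (intro proj_unique subspace_add[OF subspace_S] proj_in_S)
  have "c *\<^sub>R x - c *\<^sub>R proj x \<in> Z"
    using subspace_scale[OF subspace_Z diff_proj_in_Z[of x]] by (simp add: algebra_simps)
  then show "proj (c *\<^sub>R x) = c *\<^sub>R proj x"
    by (intro proj_unique subspace_scale[OF subspace_S] proj_in_S)
qed

lemma proj_fixes_S: "s \<in> S \<Longrightarrow> proj s = s"
  using subspace_0[OF subspace_Z] by (intro proj_unique) simp_all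

lemma proj_vanishes_Z: "z \<in> Z \<Longrightarrow> proj z = 0"
  using subspace_0[OF subspace_S] by (intro proj_unique) simp_all

lemma proj_suminf:
  assumes sums: "a sums y" and summable: "summable (\<lambda>k. norm (proj (a k)))"
  shows "proj y = (\<Sum>k. proj (a k))"
proof (rule proj_unique)
  have proj_sums: "(\<lambda>k. proj (a k)) sums (\<Sum>k. proj (a k))"
    using summable_norm_cancel[OF summable] by (rule summable_sums)
  show "(\<Sum>k. proj (a k)) \<in> S"
    by (rule closed_sequentially[OF closed_S _ proj_sums[unfolded sums_def]])
      (rule subspace_sum[OF subspace_S proj_in_S])
  have "(\<lambda>k. a k - proj (a k)) sums (y - (\<Sum>k. proj (a k)))"
    using sums proj_sums by (rule sums_diff)
  then show "y - (\<Sum>k. proj (a k)) \<in> Z"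
    unfolding sums_def
    by (rule closed_sequentially[OF closed_Z, rotated]) (rule subspace_sum[OF subspace_Z diff_proj_in_Z])
qed

lemma ball_in_closure_proj_sublevel:
  obtains n x0 r where "r > 0" "ball x0 r \<subseteq> closure {x. norm (proj x) \<le> real n}"
proof -
  define A where "A n = closure {x. norm (proj x) \<le> real n}" for n
  have "x \<in> A (nat \<lceil>norm (proj x)\<rceil>)" for x
    unfolding A_def by (rule closure_subset[THEN subsetD]) (simp add: real_nat_ceiling_ge)
  then have "(\<Union>n. A n) = UNIV"
    by (intro UNIV_eq_I[THEN sym] UN_I[OF UNIV_I])
  then obtain n where "interior (A n) \<noteq> {}"
    using Baire_closed_cover[of A] unfolding A_def by auto
  then obtain x0 where "x0 \<in> interior (A n)"
    by blast
  then obtain r where "r > 0" "ball x0 r \<subseteq> A n"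
    unfolding mem_interior by blast
  then show thesis
    unfolding A_def by (rule that)
qed

lemma proj_approx_small:
  obtains r c where "r > 0" "c \<ge> 0"
    "\<And>y e. norm y < r \<Longrightarrow> e > 0 \<Longrightarrow> \<exists>a. norm (proj a) \<le> c \<and> norm (y - a) < e"
proof -
  obtain n x0 r where r: "r > 0" and ball: "ball x0 r \<subseteq> closure {x. norm (proj x) \<le> real n}"
    by (rule ball_in_closure_proj_sublevel)
  have "\<exists>a. norm (proj a) \<le> 2 * real n \<and> norm (y - a) < e" if "norm y < r" "e > 0" for y e
  proof -
    have "x0 + y \<in> closure {x. norm (proj x) \<le> real n}" "x0 \<in> closure {x. norm (proj x) \<le> real n}"
      using ball r \<open>norm y < r\<close> by (auto simp: dist_norm)
    moreover have "e / 2 > 0"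
      using \<open>e > 0\<close> by simp
    ultimately obtain a1 a2 where a1: "norm (proj a1) \<le> real n" "dist a1 (x0 + y) < e / 2"
      and a2: "norm (proj a2) \<le> real n" "dist a2 x0 < e / 2"
      unfolding closure_approachable Bex_def mem_Collect_eq by meson
    have "norm (proj (a1 - a2)) \<le> norm (proj a1) + norm (proj a2)"
      unfolding linear_diff[OF linear_proj] by (rule norm_triangle_ineq4)
    moreover have "norm (y - (a1 - a2)) \<le> dist a1 (x0 + y) + dist a2 x0"
    proof -
      have "norm (y - (a1 - a2)) = norm ((x0 + y - a1) + (a2 - x0))"
        by (rule arg_cong[where f = norm]) (simp add: algebra_simps)
      also have "\<dots> \<le> norm (x0 + y - a1) + norm (a2 - x0)"
        by (rule norm_triangle_ineq)
      also have "\<dots> = dist a1 (x0 + y) + dist a2 x0"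
        by (simp add: dist_norm norm_minus_commute)
      finally show ?thesis .
    qed
    ultimately show ?thesis
      using a1 a2 by (intro exI[of _ "a1 - a2"]) simp
  qed
  then show thesis
    using that[of r "2 * real n"] r by simp
qed

lemma proj_approx:
  obtains M where "M \<ge> 0" "\<And>y. \<exists>a. norm (proj a) \<le> M * norm y \<and> norm (y - a) \<le> norm y / 2"
proof -
  obtain r c where r: "r > 0" and c: "c \<ge> 0"
    and approx: "\<And>y e. norm y < r \<Longrightarrow> e > 0 \<Longrightarrow> \<exists>a. norm (proj a) \<le> c \<and> norm (y - a) < e"
    using proj_approx_small by blast
  have "\<exists>a. norm (proj a) \<le> (2 * c / r) * norm y \<and> norm (y - a) \<le> norm y / 2" for y
  proof (cases "y = 0")
    case True
    then show ?thesis
      by (intro exI[of _ 0]) (simp add: linear_0[OF linear_proj])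
  next
    case False
    define t where "t = r / (2 * norm y)"
    have t: "t > 0"
      using False r by (simp add: t_def)
    have small: "norm (t *\<^sub>R y) < r"
      using False r by (simp add: t_def)
    obtain a where a: "norm (proj a) \<le> c" "norm (t *\<^sub>R y - a) < r / 4"
      using approx[OF small, of "r / 4"] r by auto
    have "norm (proj ((1 / t) *\<^sub>R a)) \<le> c / t"
      using a(1) t by (simp add: linear_scale[OF linear_proj] divide_right_mono)
    also have "c / t = (2 * c / r) * norm y"
      using False r by (simp add: t_def)
    finally have proj_bound: "norm (proj ((1 / t) *\<^sub>R a)) \<le> (2 * c / r) * norm y" .
    have "y - (1 / t) *\<^sub>R a = (1 / t) *\<^sub>R (t *\<^sub>R y - a)"
      using t by (simp add: algebra_simps)
    then have "norm (y - (1 / t) *\<^sub>R a) = norm (t *\<^sub>R y - a) / t"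
      using t by simp
    also have "\<dots> < (r / 4) / t"
      using a(2) t by (rule divide_strict_right_mono)
    also have "(r / 4) / t = norm y / 2"
      using False r by (simp add: t_def)
    finally show ?thesis
      using proj_bound by (intro exI[of _ "(1 / t) *\<^sub>R a"]) simp
  qed
  then show thesis
    using that[of "2 * c / r"] r c by simp
qed

text \<open>The successive-approximation step of the open mapping theorem.\<close>

lemma proj_bounded_if_approx:
  assumes "M \<ge> 0"
    and approx: "\<And>y. norm (proj (f y)) \<le> M * norm y" "\<And>y. norm (y - f y) \<le> norm y / 2"
  shows "norm (proj y) \<le> norm y * (2 * M)"
proof -
  define Y where "Y k = ((\<lambda>u. u - f u) ^^ k) y" for k
  have Y_bound: "norm (Y k) \<le> norm y * (1 / 2) ^ k" for k
  proof (induction k)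
    case (Suc k)
    have "norm (Y (Suc k)) \<le> norm (Y k) / 2"
      using approx(2)[of "Y k"] by (simp add: Y_def)
    with Suc show ?case
      by simp
  qed (simp add: Y_def)
  have partial_sums: "(\<Sum>k<n. f (Y k)) = y - Y n" for n
    by (induction n) (simp_all add: Y_def)
  have "(\<lambda>k. norm y * (1 / 2 :: real) ^ k) \<longlonglongrightarrow> 0"
    by (intro tendsto_mult_right_zero LIMSEQ_power_zero) simp
  then have "Y \<longlonglongrightarrow> 0"
    by (rule Lim_null_comparison[OF always_eventually, rotated]) (simp add: Y_bound)
  then have sums: "(\<lambda>k. f (Y k)) sums y"
    unfolding sums_def partial_sums using tendsto_diff[OF tendsto_const[of y]] by fastforce
  have proj_bound: "norm (proj (f (Y k))) \<le> M * norm y * (1 / 2) ^ k" for k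
    using approx(1)[of "Y k"] mult_left_mono[OF Y_bound[of k] \<open>M \<ge> 0\<close>] by simp
  have geometric: "summable (\<lambda>k. M * norm y * (1 / 2 :: real) ^ k)"
    by (intro summable_mult summable_geometric) simp
  have summable: "summable (\<lambda>k. norm (proj (f (Y k))))"
    using proj_bound by (intro summable_comparison_test'[OF geometric, of 0]) simp
  have "norm (proj y) = norm (\<Sum>k. proj (f (Y k)))"
    by (simp add: proj_suminf[OF sums summable])
  also have "\<dots> \<le> (\<Sum>k. norm (proj (f (Y k))))"
    by (rule summable_norm[OF summable])
  also have "\<dots> \<le> (\<Sum>k. M * norm y * (1 / 2) ^ k)"
    by (rule suminf_le[OF proj_bound summable geometric])
  also have "\<dots> = norm y * (2 * M)"
    by (simp add: suminf_mult summable_geometric suminf_geometric)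
  finally show ?thesis .
qed

lemma bounded_linear_proj: "bounded_linear proj"
proof -
  obtain M where "M \<ge> 0" and approx: "\<forall>y. \<exists>a. norm (proj a) \<le> M * norm y \<and> norm (y - a) \<le> norm y / 2"
    by (rule proj_approx) blast
  obtain f where f: "\<forall>y. norm (proj (f y)) \<le> M * norm y \<and> norm (y - f y) \<le> norm y / 2"
    using choice[OF approx] by blast
  have "norm (proj y) \<le> norm y * (2 * M)" for y
    using \<open>M \<ge> 0\<close> f by (intro proj_bounded_if_approx[where f = f]) simp_all
  then show ?thesis
    by (rule bounded_linear_intro[OF linear_add[OF linear_proj] linear_scale[OF linear_proj]])
qed

lemma proj_norm_le: "norm (proj x) \<le> onorm proj * norm x"
  by (rule onorm[OF bounded_linear_proj])

lemma range_Int_eq_0_if_close: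
  fixes P P' :: "'a \<Rightarrow>\<^sub>L 'a"
  assumes P_into_S: "\<And>x. P x \<in> S" and idem: "P' o\<^sub>L P' = P'"
    and close: "(onorm proj + 1) * norm (P' - P) < 1"
  shows "range (blinfun_apply P') \<inter> Z = {0}"
proof -
  have "x = 0" if x: "x \<in> range (blinfun_apply P')" "x \<in> Z" for x
  proof -
    have fixed: "P' x = x"
      using x(1) idem by (metis blinfun_apply_blinfun_compose rangeE)
    then have diff: "P x - x = (P - P') x"
      by (simp add: blinfun.diff_left)
    have "proj (P x - x) = P x"
      using proj_fixes_S[OF P_into_S] proj_vanishes_Z[OF x(2)] by (simp add: linear_diff[OF linear_proj])
    then have "norm (P x) \<le> onorm proj * (norm (P' - P) * norm x)"
      using proj_norm_le[of "P x - x"] norm_blinfun[of "P - P'" x] onorm_pos_le[OF bounded_linear_proj]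
      by (simp add: diff norm_minus_commute order_trans mult_left_mono)
    moreover have "norm x \<le> norm (P x) + norm (P' - P) * norm x"
    proof -
      have "norm x = norm (P x - (P - P') x)"
        by (simp add: blinfun.diff_left fixed)
      also have "\<dots> \<le> norm (P x) + norm ((P - P') x)"
        by (rule norm_triangle_ineq4)
      also have "\<dots> \<le> norm (P x) + norm (P' - P) * norm x"
        using norm_blinfun[of "P - P'" x] by (simp add: norm_minus_commute)
      finally show ?thesis .
    qed
    ultimately have "norm x \<le> ((onorm proj + 1) * norm (P' - P)) * norm x"
      by (simp add: algebra_simps)
    with close show "x = 0"
      by (metis mult_le_cancel_right1 norm_ge_zero norm_le_zero_iff not_le)
  qed
  then show ?thesis
    using subspace_0[OF subspace_Z] by (auto intro: range_eqI[of _ _ 0])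
qed

lemma decompose_range_if_close:
  fixes P P' :: "'a \<Rightarrow>\<^sub>L 'a"
  assumes P_fixes_S: "\<And>s. s \<in> S \<Longrightarrow> P s = s"
    and close: "onorm proj * norm (P' - P) < 1"
  shows "\<exists>s\<in>range (blinfun_apply P'). x - s \<in> Z"
proof -
  \<comment> \<open>A fixed point \<open>y\<close> of \<open>g\<close> yields the decomposition \<open>x = P' (proj y) + (y - proj y)\<close>.\<close>
  define g where "g y = x - (P' - P) (proj y)" for y
  have "dist (g y1) (g y2) \<le> (norm (P' - P) * onorm proj) * dist y1 y2" for y1 y2
  proof -
    have "dist (g y1) (g y2) = norm ((P' - P) (proj (y1 - y2)))"
      by (simp add: g_def dist_norm linear_diff[OF linear_proj] blinfun.diff_right norm_minus_commute)
    also have "\<dots> \<le> norm (P' - P) * (onorm proj * norm (y1 - y2))"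
      using norm_blinfun proj_norm_le by (rule order_trans[OF _ mult_left_mono]) simp
    finally show ?thesis
      by (simp add: dist_norm mult.assoc)
  qed
  then obtain y where "g y = y"
    using banach_fix_type[of "norm (P' - P) * onorm proj" g] close onorm_pos_le[OF bounded_linear_proj]
    by (auto simp: mult.commute)
  then have "x - P' (proj y) = y - proj y"
    using P_fixes_S[OF proj_in_S] by (simp add: g_def blinfun.diff_left algebra_simps)
  then show ?thesis
    using diff_proj_in_Z by (metis rangeI)
qed

lemma complementary_near_projection:
  fixes P :: "'a \<Rightarrow>\<^sub>L 'a"
  assumes "\<And>x. P x \<in> S" "\<And>s. s \<in> S \<Longrightarrow> P s = s"
  obtains \<delta> where "\<delta> > 0" "\<And>P'. P' o\<^sub>L P' = P' \<Longrightarrow> dist P' P < \<delta> \<Longrightarrow>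
    range (blinfun_apply P') \<inter> Z = {0} \<and> (\<forall>x. \<exists>s\<in>range (blinfun_apply P'). x - s \<in> Z)"
proof
  have K: "onorm proj \<ge> 0"
    by (rule onorm_pos_le[OF bounded_linear_proj])
  show "1 / (onorm proj + 1) > 0"
    using K by simp
  fix P' :: "'a \<Rightarrow>\<^sub>L 'a"
  assume "P' o\<^sub>L P' = P'" "dist P' P < 1 / (onorm proj + 1)"
  moreover from this have "(onorm proj + 1) * norm (P' - P) < 1"
    using K by (simp add: dist_norm field_simps)
  moreover from this have "onorm proj * norm (P' - P) < 1"
    by (rule le_less_trans[OF mult_right_mono[OF _ norm_ge_zero], rotated]) simp
  ultimately show "range (blinfun_apply P') \<inter> Z = {0} \<and> (\<forall>x. \<exists>s\<in>range (blinfun_apply P'). x - s \<in> Z)"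
    using assms range_Int_eq_0_if_close decompose_range_if_close by blast
qed

end

definition complementary :: "'a::ab_group_add set \<Rightarrow> 'a set \<Rightarrow> bool" where
  "complementary S Z \<longleftrightarrow> S \<inter> Z = {0} \<and> {s + z | s z. s \<in> S \<and> z \<in> Z} = UNIV"

lemma complementary_iff: "complementary S Z \<longleftrightarrow> S \<inter> Z = {0} \<and> (\<forall>x. \<exists>s\<in>S. x - s \<in> Z)"
proof -
  have "{s + z | s z. s \<in> S \<and> z \<in> Z} = UNIV \<longleftrightarrow> (\<forall>x. \<exists>s\<in>S. x - s \<in> Z)"
  proof
    assume sum: "{s + z | s z. s \<in> S \<and> z \<in> Z} = UNIV"
    show "\<forall>x. \<exists>s\<in>S. x - s \<in> Z"
    proof
      fix x
      have "x \<in> {s + z | s z. s \<in> S \<and> z \<in> Z}"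
        using sum by simp
      then obtain s z where "x = s + z" "s \<in> S" "z \<in> Z"
        by blast
      then show "\<exists>s\<in>S. x - s \<in> Z"
        by (intro bexI[of _ s]) simp_all
    qed
  next
    assume decompose: "\<forall>x. \<exists>s\<in>S. x - s \<in> Z"
    show "{s + z | s z. s \<in> S \<and> z \<in> Z} = UNIV"
    proof (rule UNIV_eq_I[THEN sym])
      fix x
      obtain s where "s \<in> S" "x - s \<in> Z"
        using decompose by blast
      then show "x \<in> {s + z | s z. s \<in> S \<and> z \<in> Z}"
        by (intro CollectI exI[of _ s] exI[of _ "x - s"]) simp
    qed
  qed
  then show ?thesis
    unfolding complementary_def by simp
qed

lemma common_complement_iff:
  "common_complement S T \<longleftrightarrow> (\<exists>Z. closed_csubspace Z \<and> complementary S Z \<and> complementary T Z)"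
  unfolding common_complement_def complementary_def by (simp only: conj_ac)

lemma closed_csubspace_imp_subspace:
  assumes "closed_csubspace Z"
  shows "subspace Z"
proof -
  have "c *\<^sub>R x \<in> Z" if "x \<in> Z" for c x
  proof -
    have "complex_of_real c *\<^sub>C x \<in> Z"
      using assms that by (simp add: closed_csubspace_def)
    then show ?thesis
      by (simp add: scaleC_of_real)
  qed
  then show ?thesis
    using assms by (simp add: subspace_def closed_csubspace_def)
qed

lemma range_idempotent_blinfun:
  assumes "P o\<^sub>L P = P"
  shows "range (blinfun_apply P) = {x. P x = x}"
  using assms by (metis (mono_tags, lifting) blinfun_apply_blinfun_compose image_iff mem_Collect_eq rangeI set_eqI)

lemma openin_complementary_idempotents:
  fixes Z :: "'a::banach set"
  assumes "closed Z" "subspace Z"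
  defines "I \<equiv> {P :: 'a \<Rightarrow>\<^sub>L 'a. P o\<^sub>L P = P}"
  shows "openin (top_of_set I) (I \<inter> {P. complementary (range (blinfun_apply P)) Z})"
  unfolding openin_euclidean_subtopology_iff
proof (intro conjI ballI)
  fix P assume "P \<in> I \<inter> {P. complementary (range (blinfun_apply P)) Z}"
  then have idem: "P o\<^sub>L P = P" and "complementary (range (blinfun_apply P)) Z"
    by (auto simp: I_def)
  have range_P: "range (blinfun_apply P) = {x. P x = x}"
    by (rule range_idempotent_blinfun[OF idem])
  have "closed (range (blinfun_apply P))"
    unfolding range_P
    by (intro closed_Collect_eq linear_continuous_on blinfun.bounded_linear_right continuous_on_id)
  moreover have "subspace (range (blinfun_apply P))"
    unfolding range_P by (simp add: subspace_def blinfun.zero_right blinfun.add_right blinfun.scaleR_right)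
  ultimately interpret complementary_subspaces "range (blinfun_apply P)" Z
    using assms \<open>complementary (range (blinfun_apply P)) Z\<close> by unfold_locales (auto simp: complementary_iff)
  obtain \<delta> where "\<delta> > 0" "\<And>P'. P' o\<^sub>L P' = P' \<Longrightarrow> dist P' P < \<delta> \<Longrightarrow>
      range (blinfun_apply P') \<inter> Z = {0} \<and> (\<forall>x. \<exists>s\<in>range (blinfun_apply P'). x - s \<in> Z)"
    using complementary_near_projection[of P] range_P by blast
  then show "\<exists>e>0. \<forall>P'\<in>I. dist P' P < e \<longrightarrow> P' \<in> I \<inter> {P. complementary (range (blinfun_apply P)) Z}"
    by (auto simp: I_def complementary_iff)
qed auto

instance chilbert_space \<subseteq> banach ..

theorem mainTheorem3:
  assumes "separable_space TYPE('a::chilbert_space)"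
    and "infinite_dimensional TYPE('a)"
  shows "openin (top_of_set (orth_projections \<times> orth_projections))
           (Delta :: (('a \<Rightarrow>\<^sub>L 'a) \<times> ('a \<Rightarrow>\<^sub>L 'a)) set)"
proof -
  define U :: "'a set \<Rightarrow> ('a \<Rightarrow>\<^sub>L 'a) set" where
    "U Z = orth_projections \<inter> {P. complementary (range (blinfun_apply P)) Z}" for Z
  have orth_idem: "orth_projections \<subseteq> {P :: 'a \<Rightarrow>\<^sub>L 'a. P o\<^sub>L P = P}"
    by (auto simp: orth_projections_def)
  have open_U: "openin (top_of_set orth_projections) (U Z)" if "closed_csubspace Z" for Z
  proof -
    have "closed Z"
      using that by (simp add: closed_csubspace_def)
    from openin_complementary_idempotents[OF this closed_csubspace_imp_subspace[OF that]] orth_idem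
    show ?thesis
      unfolding U_def by (rule openin_subtopology_Int_subset)
  qed
  have Delta_eq: "Delta = (\<Union>Z\<in>{Z. closed_csubspace Z}. U Z \<times> U Z)"
    by (auto simp: Delta_def U_def common_complement_iff)
  show ?thesis
    unfolding Delta_eq by (intro openin_Union) (auto intro!: openin_Times open_U)
qed

end
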